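(* Fix $p\in(0,1/2]$, an integer $k\ge 1$, and $\epsilon>0$. There exist $c=c(p,k,\epsilon)>0$ and $n_0=n_0(p,k,\epsilon)$ such that the following holds. Let $n\ge n_0$, let $M$ be an $(n-k)\times n$ random matrix with independent $\operatorname{Ber}(p)$ entries, and let $V$ be a (deterministic) $n\times k$ real matrix with orthonormal columns. Then \[\mathbb{P}\big[\|MV\|_{\operatorname{HS}}\le c\sqrt{n}\big]\le (1-p+\epsilon)^{kn}.\]
   Context: $\operatorname{Ber}(p)$ takes value $1$ with probability $p$ and $0$ with probability $1-p$. For a matrix $A=(A_{ij})$, $\|A\|_{\operatorname{HS}}^2=\sum_{i,j}A_{ij}^2$ (Hilbert–Schmidt norm). *)

theory Defs
  imports "HOL-Probability.Probability"
begin

text \<open>An m x n random matrix with independent Ber(p) entries, represented as a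
  function from index pairs (i,j), i < m, j < n, to bool (True = entry 1).
  Outside the index range the entry is the default value False.\<close>
definition ber_matrix_pmf :: "nat \<Rightarrow> nat \<Rightarrow> real \<Rightarrow> (nat \<times> nat \<Rightarrow> bool) pmf" where
  "ber_matrix_pmf m n p = Pi_pmf ({..<m} \<times> {..<n}) False (\<lambda>_. bernoulli_pmf p)"

definition entry :: "(nat \<times> nat \<Rightarrow> bool) \<Rightarrow> nat \<Rightarrow> nat \<Rightarrow> real" where
  "entry M i j = of_bool (M (i, j))"

definition orthonormal_cols :: "nat \<Rightarrow> nat \<Rightarrow> (nat \<Rightarrow> nat \<Rightarrow> real) \<Rightarrow> bool" where
  "orthonormal_cols n k V \<longleftrightarrow>
     (\<forall>a<k. \<forall>b<k. (\<Sum>l<n. V l a * V l b) = (if a = b then 1 else 0))"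

definition hs_norm_prod :: "nat \<Rightarrow> nat \<Rightarrow> nat \<Rightarrow> (nat \<times> nat \<Rightarrow> bool) \<Rightarrow> (nat \<Rightarrow> nat \<Rightarrow> real) \<Rightarrow> real" where
  "hs_norm_prod m n k M V =
     sqrt (\<Sum>i<m. \<Sum>j<k. (\<Sum>l<n. entry M i l * V l j)\<^sup>2)"

end

theory Submission
  imports Defs
begin

(*
  A row r of M is a 0/1 vector with independent Ber(p) entries, and |rV|^2 = |sum_l r_l v_l|^2,
  where v_l in R^k are the rows of V. Orthonormality of the columns says exactly that the v_l
  form a Parseval frame of R^k, with sum_l |v_l|^2 = k.

  For a Parseval frame of a d-dimensional space and any centre a, the random subsum
  sum_l r_l v_l lies within distance rho of a with probability at most (1 - p)^d once rho is
  small. If some frame vector v_l is longer than 2 rho, the events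
  for r_l = 0 and r_l = 1 are disjoint, so conditioning on r_l costs a factor 1 - p >= p, and
  projecting orthogonally to v_l leaves a Parseval frame of dimension d - 1. If all frame
  vectors are short, a one-dimensional projection is a Bernoulli sum with small weights, and
  an Esseen-type Fourier bound makes its concentration O(rho).

  Hence the exponential moment E exp(-tau |rV|^2) is close to (1 - p)^k for large tau; the
  n - k rows are independent, and the exponential Markov inequality finishes the proof.
*)

section \<open>Products of Bernoulli distributions\<close>

lemma finite_set_Pi_pmf:
  fixes q :: "'a \<Rightarrow> 'b::finite pmf"
  assumes "finite A"
  shows "finite (set_pmf (Pi_pmf A d q))"
  using finite_PiE_dflt[OF assms] set_Pi_pmf_subset'[OF assms]
  by (meson finite_subset finite)

lemma integrable_Pi_pmf:
  fixes q :: "'a \<Rightarrow> 'b::finite pmf" and f :: "_ \<Rightarrow> 'c::{banach, second_countable_topology}"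
  assumes "finite A"
  shows "integrable (measure_pmf (Pi_pmf A d q)) f"
  by (rule integrable_measure_pmf_finite[OF finite_set_Pi_pmf[OF assms]])

abbreviation bernoulli_vec :: "'i set \<Rightarrow> real \<Rightarrow> ('i \<Rightarrow> bool) pmf" where
  "bernoulli_vec L p \<equiv> Pi_pmf L False (\<lambda>_. bernoulli_pmf p)"

lemma expectation_bernoulli_vec_insert:
  fixes h :: "('i \<Rightarrow> bool) \<Rightarrow> 'c::{banach, second_countable_topology}"
  assumes "finite L" "l \<notin> L" "0 \<le> p" "p \<le> 1"
  shows "measure_pmf.expectation (bernoulli_vec (insert l L) p) h =
    (1 - p) *\<^sub>R measure_pmf.expectation (bernoulli_vec L p) (\<lambda>f. h (f(l := False)))
    + p *\<^sub>R measure_pmf.expectation (bernoulli_vec L p) (\<lambda>f. h (f(l := True)))"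
proof -
  let ?upd = "\<lambda>y. map_pmf (\<lambda>f. f(l := y)) (bernoulli_vec L p)"
  have "bernoulli_vec (insert l L) p = bernoulli_pmf p \<bind> ?upd"
    using assms by (simp add: Pi_pmf_insert' map_pmf_def)
  moreover have "finite (set_pmf (?upd y))" for y
    unfolding set_map_pmf by (intro finite_imageI finite_set_Pi_pmf assms(1))
  then have "measure_pmf.expectation (bernoulli_pmf p \<bind> ?upd) h =
      (\<Sum>y\<in>UNIV. pmf (bernoulli_pmf p) y *\<^sub>R measure_pmf.expectation (?upd y) h)"
    by (intro pmf_expectation_bind) auto
  ultimately show ?thesis
    using assms by (simp add: UNIV_bool add.commute)
qed

lemma prob_bernoulli_vec_insert:
  assumes "finite L" "l \<notin> L" "0 \<le> p" "p \<le> 1"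
  shows "measure_pmf.prob (bernoulli_vec (insert l L) p) E =
    (1 - p) * measure_pmf.prob (bernoulli_vec L p) {f. f(l := False) \<in> E}
    + p * measure_pmf.prob (bernoulli_vec L p) {f. f(l := True) \<in> E}"
proof -
  have "(\<lambda>f. indicator E (f(l := y))) = (indicator {f. f(l := y) \<in> E} :: _ \<Rightarrow> real)" for y
    by (auto simp: indicator_def)
  then show ?thesis
    using expectation_bernoulli_vec_insert[OF assms, of "indicator E :: _ \<Rightarrow> real"] by simp
qed

lemma prob_bernoulli_vec_insert_disjoint_le:
  assumes "finite L" "l \<notin> L" "0 \<le> p" "p \<le> 1/2"
    and disjoint: "{f. f(l := False) \<in> E} \<inter> {f. f(l := True) \<in> E} = {}"
    and sub: "\<And>y. {f. f(l := y) \<in> E} \<subseteq> B"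
  shows "measure_pmf.prob (bernoulli_vec (insert l L) p) E \<le> (1 - p) * measure_pmf.prob (bernoulli_vec L p) B"
proof -
  let ?P = "measure_pmf.prob (bernoulli_vec L p)"
  have union: "?P {f. f(l := False) \<in> E} + ?P {f. f(l := True) \<in> E} \<le> ?P B"
    using disjoint sub[of False] sub[of True]
    by (metis measure_pmf.finite_measure_Union measure_pmf.finite_measure_mono sets_measure_pmf
        UNIV_I Un_least)
  have "measure_pmf.prob (bernoulli_vec (insert l L) p) E
      = (1 - p) * ?P {f. f(l := False) \<in> E} + p * ?P {f. f(l := True) \<in> E}"
    using assms(1-4) by (intro prob_bernoulli_vec_insert) auto
  also have "\<dots> \<le> (1 - p) * ?P {f. f(l := False) \<in> E} + (1 - p) * ?P {f. f(l := True) \<in> E}"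
    using assms(3,4) by (intro add_left_mono mult_right_mono) auto
  also have "\<dots> \<le> (1 - p) * ?P B"
    using union assms(4) by (simp add: distrib_left[symmetric])
  finally show ?thesis .
qed

lemma Pi_pmf_Times:
  assumes "finite A" "finite B"
  shows "Pi_pmf (A \<times> B) d (\<lambda>_. q) = map_pmf case_prod (Pi_pmf A (\<lambda>_. d) (\<lambda>_. Pi_pmf B d (\<lambda>_. q)))"
proof (rule pmf_eqI)
  fix M :: "'a \<times> 'b \<Rightarrow> 'c"
  have "inj (case_prod :: ('a \<Rightarrow> 'b \<Rightarrow> 'c) \<Rightarrow> _)"
    by (metis curry_case_prod injI)
  then have "pmf (map_pmf case_prod (Pi_pmf A (\<lambda>_. d) (\<lambda>_. Pi_pmf B d (\<lambda>_. q)))) M =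
      pmf (Pi_pmf A (\<lambda>_. d) (\<lambda>_. Pi_pmf B d (\<lambda>_. q))) (curry M)"
    by (metis case_prod_curry pmf_map_inj')
  also have "\<dots> = pmf (Pi_pmf (A \<times> B) d (\<lambda>_. q)) M"
  proof (cases "\<forall>x. x \<notin> A \<times> B \<longrightarrow> M x = d")
    case True
    then show ?thesis
      using assms by (auto simp: pmf_Pi fun_eq_iff prod.cartesian_product)
  next
    case False
    then obtain i l where "(i, l) \<notin> A \<times> B" "M (i, l) \<noteq> d" by auto
    then show ?thesis
      using assms by (auto simp: pmf_Pi fun_eq_iff)
  qed
  finally show "pmf (Pi_pmf (A \<times> B) d (\<lambda>_. q)) M =
      pmf (map_pmf case_prod (Pi_pmf A (\<lambda>_. d) (\<lambda>_. Pi_pmf B d (\<lambda>_. q)))) M" ..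
qed

lemma expectation_prod_rows:
  fixes G :: "('b \<Rightarrow> bool) \<Rightarrow> real"
  assumes "finite A" "finite B" "\<And>r. 0 \<le> G r"
  shows "measure_pmf.expectation (bernoulli_vec (A \<times> B) p) (\<lambda>M. \<Prod>i\<in>A. G (\<lambda>l. M (i, l)))
       = measure_pmf.expectation (bernoulli_vec B p) G ^ card A"
proof -
  have "measure_pmf.expectation (bernoulli_vec (A \<times> B) p) (\<lambda>M. \<Prod>i\<in>A. G (\<lambda>l. M (i, l)))
      = measure_pmf.expectation (Pi_pmf A (\<lambda>_. False) (\<lambda>_. bernoulli_vec B p)) (\<lambda>F. \<Prod>i\<in>A. G (F i))"
    using assms(1,2) by (simp add: Pi_pmf_Times)
  also have "\<dots> = (\<Prod>i\<in>A. measure_pmf.expectation (bernoulli_vec B p) G)"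
    by (intro expectation_prod_Pi_pmf integrable_Pi_pmf assms)
  finally show ?thesis by simp
qed

lemma cos_ge_one_minus_sq_div_2: "1 - x\<^sup>2 / 2 \<le> cos (x::real)"
proof -
  have "(sin (x / 2))\<^sup>2 \<le> (x / 2)\<^sup>2"
    by (metis abs_ge_zero abs_sin_x_le_abs_x power2_abs power_mono)
  then show ?thesis
    using cos_double_sin[of "x / 2"] by (simp add: power_divide)
qed

lemma cos_le_taylor_4: "cos (x::real) \<le> 1 - x\<^sup>2 / 2 + x ^ 4 / 24"
proof -
  obtain t where t: "cos x = (\<Sum>m<4. cos_coeff m * x ^ m) + cos (t + 1/2 * real 4 * pi) / fact 4 * x ^ 4"
    using Maclaurin_cos_expansion[of x 4] by blast
  have "(\<Sum>m<4. cos_coeff m * x ^ m) = 1 - x\<^sup>2 / 2"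
    by (simp add: eval_nat_numeral cos_coeff_def) presburger
  moreover have "cos (t + 1/2 * real 4 * pi) * x ^ 4 \<le> 1 * x ^ 4"
    by (rule mult_right_mono) (simp_all add: zero_le_even_power)
  moreover have "(fact 4 :: real) = 24"
    by (simp add: eval_nat_numeral)
  ultimately show ?thesis
    using t by simp
qed

lemma one_minus_cos_ge_sq_div_4:
  assumes "\<bar>x\<bar> \<le> 1"
  shows "x\<^sup>2 / 4 \<le> 1 - cos (x::real)"
proof -
  have "x\<^sup>2 \<le> 1"
    using assms by (metis abs_ge_zero power2_abs power_le_one)
  have "x ^ 4 = x\<^sup>2 * x\<^sup>2"
    by algebra
  also have "\<dots> \<le> x\<^sup>2"
    using \<open>x\<^sup>2 \<le> 1\<close> by (intro mult_left_le) simp_all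
  finally show ?thesis
    using cos_le_taylor_4[of x] zero_le_power2[of x] by linarith
qed

lemma sum_cos_diff_eq_sq:
  "(\<Sum>j<N. \<Sum>j'<N. cos ((real j - real j') * x)) =
     (\<Sum>j<N. cos (real j * x))\<^sup>2 + (\<Sum>j<N. sin (real j * x))\<^sup>2"
  by (simp add: left_diff_distrib cos_diff power2_eq_square sum_product sum.distrib)

lemma sum_cos_diff_ge:
  assumes "\<bar>x\<bar> * real N \<le> 1/2"
  shows "(real N)\<^sup>2 / 2 \<le> (\<Sum>j<N. \<Sum>j'<N. cos ((real j - real j') * x))"
proof -
  have "1/2 \<le> cos ((real j - real j') * x)" if "j < N" "j' < N" for j j'
  proof -
    have "\<bar>real j - real j'\<bar> \<le> real N"
      using that by linarith
    then have "\<bar>(real j - real j') * x\<bar> \<le> real N * \<bar>x\<bar>"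
      unfolding abs_mult by (intro mult_right_mono) auto
    then have "\<bar>(real j - real j') * x\<bar> \<le> 1/2"
      using assms by (simp only: mult.commute)
    then have "((real j - real j') * x)\<^sup>2 \<le> (1/2)\<^sup>2"
      by (metis abs_ge_zero power2_abs power_mono)
    then show ?thesis
      using cos_ge_one_minus_sq_div_2[of "(real j - real j') * x"] by (simp add: power_divide)
  qed
  then have "(\<Sum>j<N. \<Sum>j'<N. 1/2 :: real) \<le> (\<Sum>j<N. \<Sum>j'<N. cos ((real j - real j') * x))"
    by (intro sum_mono) auto
  then show ?thesis
    by (simp add: power2_eq_square)
qed

lemma sum_power_inj_le:
  fixes x :: real
  assumes "0 \<le> x" "x < 1" "finite I" "inj_on g I"
  shows "(\<Sum>i\<in>I. x ^ g i) \<le> 1 / (1 - x)"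
proof -
  obtain M where M: "g ` I \<subseteq> {..<M}"
    using finite_nat_iff_bounded[of "g ` I"] assms(3) by blast
  have "(\<Sum>i\<in>I. x ^ g i) = (\<Sum>m\<in>g ` I. x ^ m)"
    by (simp add: sum.reindex[OF assms(4)])
  also have "\<dots> \<le> (\<Sum>m<M. x ^ m)"
    using M assms(1) by (intro sum_mono2) auto
  also have "\<dots> = (1 - x ^ M) / (1 - x)"
    using assms(2) by (simp add: sum_gp_strict)
  also have "\<dots> \<le> 1 / (1 - x)"
    using assms(1,2) by (intro divide_right_mono) auto
  finally show ?thesis .
qed

lemma sum_power_dist_le:
  fixes x :: real
  assumes "0 \<le> x" "x < 1"
  shows "(\<Sum>j'<N. x ^ nat \<bar>int j - int j'\<bar>) \<le> 2 / (1 - x)"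
proof -
  let ?d = "\<lambda>j'. nat \<bar>int j - int j'\<bar>"
  have split: "{..<N} = {j'. j' < N \<and> j' \<le> j} \<union> {j'. j' < N \<and> j < j'}"
    by auto
  have "(\<Sum>j'<N. x ^ ?d j') = (\<Sum>j'\<in>{j'. j' < N \<and> j' \<le> j}. x ^ ?d j') + (\<Sum>j'\<in>{j'. j' < N \<and> j < j'}. x ^ ?d j')"
    unfolding split by (rule sum.union_disjoint) auto
  also have "\<dots> \<le> 1 / (1 - x) + 1 / (1 - x)"
    using assms by (intro add_mono sum_power_inj_le) (auto simp: inj_on_def)
  finally show ?thesis
    by simp
qed

lemma inverse_one_minus_exp_le:
  fixes \<alpha> :: real
  assumes "\<alpha> > 0"
  shows "1 / (1 - exp (- \<alpha>)) \<le> 1 + 1 / \<alpha>"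
proof -
  have "exp (- \<alpha>) \<le> 1 / (1 + \<alpha>)"
    using exp_ge_add_one_self[of \<alpha>] assms by (simp add: exp_minus field_simps)
  then have "\<alpha> / (1 + \<alpha>) \<le> 1 - exp (- \<alpha>)"
    using assms by (simp add: field_simps)
  then have "1 / (1 - exp (- \<alpha>)) \<le> 1 / (\<alpha> / (1 + \<alpha>))"
    using assms by (intro frac_le) auto
  also have "\<dots> = 1 + 1 / \<alpha>"
    using assms by (simp add: field_simps)
  finally show ?thesis .
qed

lemma sum_exp_neg_sq_diff_le:
  fixes \<alpha> :: real
  assumes "\<alpha> > 0"
  shows "(\<Sum>j<N. \<Sum>j'<N. exp (- \<alpha> * (real j - real j')\<^sup>2)) \<le> 2 * real N * (1 + 1 / \<alpha>)"
proof -
  have x: "0 \<le> exp (- \<alpha>)" "exp (- \<alpha>) < 1"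
    using assms by auto
  have pointwise: "exp (- \<alpha> * (real j - real j')\<^sup>2) \<le> exp (- \<alpha>) ^ nat \<bar>int j - int j'\<bar>" for j j' :: nat
  proof -
    define m where "m = nat \<bar>int j - int j'\<bar>"
    have "\<bar>real j - real j'\<bar> = real m"
      unfolding m_def by linarith
    then have "(real j - real j')\<^sup>2 = (real m)\<^sup>2"
      by (metis power2_abs)
    moreover have "real m \<le> (real m)\<^sup>2"
      by (cases m) (auto simp: power2_eq_square)
    ultimately have "- \<alpha> * (real j - real j')\<^sup>2 \<le> real m * (- \<alpha>)"
      using assms by (simp add: mult_left_mono)
    then show ?thesis
      unfolding m_def exp_of_nat_mult[symmetric] by simp
  qed
  have "(\<Sum>j<N. \<Sum>j'<N. exp (- \<alpha> * (real j - real j')\<^sup>2))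
      \<le> (\<Sum>j<N. \<Sum>j'<N. exp (- \<alpha>) ^ nat \<bar>int j - int j'\<bar>)"
    by (intro sum_mono pointwise)
  also have "\<dots> \<le> (\<Sum>j<N. 2 / (1 - exp (- \<alpha>)))"
    by (intro sum_mono sum_power_dist_le x)
  also have "\<dots> = 2 * real N * (1 / (1 - exp (- \<alpha>)))"
    by simp
  also have "\<dots> \<le> 2 * real N * (1 + 1 / \<alpha>)"
    using assms by (intro mult_left_mono inverse_one_minus_exp_le) auto
  finally show ?thesis .
qed

section \<open>A one-dimensional small-ball estimate\<close>

definition selected_sum :: "'i set \<Rightarrow> ('i \<Rightarrow> real) \<Rightarrow> ('i \<Rightarrow> bool) \<Rightarrow> real" where
  "selected_sum L c r = (\<Sum>l\<in>L. of_bool (r l) * c l)"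

lemma selected_sum_insert_upd:
  assumes "finite L" "l \<notin> L"
  shows "selected_sum (insert l L) c (r(l := y)) = of_bool y * c l + selected_sum L c r"
proof -
  have "selected_sum (insert l L) c (r(l := y)) = of_bool y * c l + (\<Sum>m\<in>L. of_bool ((r(l := y)) m) * c m)"
    unfolding selected_sum_def sum.insert[OF assms] by simp
  also have "(\<Sum>m\<in>L. of_bool ((r(l := y)) m) * c m) = selected_sum L c r"
    unfolding selected_sum_def using assms by (intro sum.cong) auto
  finally show ?thesis .
qed

lemma expectation_cis_selected_sum:
  assumes "finite L" "0 \<le> p" "p \<le> 1"
  shows "measure_pmf.expectation (bernoulli_vec L p) (\<lambda>r. cis (t * selected_sum L c r))
       = (\<Prod>l\<in>L. of_real (1 - p) + of_real p * cis (t * c l))"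
  using assms(1)
proof (induction L rule: finite_induct)
  case empty
  then show ?case
    by (simp add: selected_sum_def)
next
  case (insert l L)
  let ?E = "measure_pmf.expectation (bernoulli_vec L p)"
  have "measure_pmf.expectation (bernoulli_vec (insert l L) p) (\<lambda>r. cis (t * selected_sum (insert l L) c r))
      = (1 - p) *\<^sub>R ?E (\<lambda>r. cis (t * selected_sum L c r))
        + p *\<^sub>R ?E (\<lambda>r. cis (t * c l) * cis (t * selected_sum L c r))"
    using insert.hyps assms
    by (simp add: expectation_bernoulli_vec_insert selected_sum_insert_upd cis_mult distrib_left)
  also have "?E (\<lambda>r. cis (t * c l) * cis (t * selected_sum L c r))
      = cis (t * c l) * ?E (\<lambda>r. cis (t * selected_sum L c r))"
    by (rule integral_mult_right_zero)
  finally show ?case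
    using insert by (simp add: scaleR_conv_of_real algebra_simps)
qed

lemma norm_bernoulli_charfun_le:
  assumes "0 \<le> p" "p \<le> 1" "\<bar>\<theta>\<bar> \<le> 1"
  shows "cmod (of_real (1 - p) + of_real p * cis \<theta>) \<le> exp (- (p * (1 - p) * \<theta>\<^sup>2 / 4))"
proof -
  define z where "z = complex_of_real (1 - p) + of_real p * cis \<theta>"
  have "(cmod z)\<^sup>2 = (1 - p + p * cos \<theta>)\<^sup>2 + (p * sin \<theta>)\<^sup>2"
    by (simp add: z_def cmod_power2)
  also have "\<dots> = 1 - 2 * p * (1 - p) * (1 - cos \<theta>)"
  proof -
    have sin_sq: "sin \<theta> * sin \<theta> = 1 - cos \<theta> * cos \<theta>"
      using sin_cos_squared_add3[of \<theta>] by linarith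
    show ?thesis
      by (simp add: power2_eq_square algebra_simps sin_sq)
  qed
  also have "\<dots> \<le> 1 - 2 * p * (1 - p) * (\<theta>\<^sup>2 / 4)"
    using one_minus_cos_ge_sq_div_4[OF assms(3)] assms(1,2)
    by (intro diff_left_mono mult_left_mono) auto
  also have "\<dots> \<le> exp (- (p * (1 - p) * \<theta>\<^sup>2 / 2))"
    using exp_ge_add_one_self[of "- (p * (1 - p) * \<theta>\<^sup>2 / 2)"] by simp
  also have "\<dots> = (exp (- (p * (1 - p) * \<theta>\<^sup>2 / 4)))\<^sup>2"
    by (simp add: power2_eq_square exp_add[symmetric])
  finally show ?thesis
    unfolding z_def[symmetric] by (rule power2_le_imp_le) simp
qed

lemma expectation_cos_selected_sum_le:
  assumes "finite L" "0 \<le> p" "p \<le> 1" "(\<Sum>l\<in>L. (c l)\<^sup>2) = 1"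
    and "\<And>l. l \<in> L \<Longrightarrow> \<bar>t * c l\<bar> \<le> 1"
  shows "measure_pmf.expectation (bernoulli_vec L p) (\<lambda>r. cos (t * (selected_sum L c r - b)))
     \<le> exp (- (p * (1 - p) / 4 * t\<^sup>2))"
proof -
  let ?E = "measure_pmf.expectation (bernoulli_vec L p)"
  have "?E (\<lambda>r. cos (t * (selected_sum L c r - b)))
      = ?E (\<lambda>r. Re (cis (- (t * b)) * cis (t * selected_sum L c r)))"
    by (simp add: cis_mult algebra_simps)
  also have "\<dots> = Re (?E (\<lambda>r. cis (- (t * b)) * cis (t * selected_sum L c r)))"
    by (rule integral_Re[OF integrable_Pi_pmf[OF assms(1)]])
  also have "?E (\<lambda>r. cis (- (t * b)) * cis (t * selected_sum L c r))
      = cis (- (t * b)) * ?E (\<lambda>r. cis (t * selected_sum L c r))"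
    by (rule integral_mult_right_zero)
  also have "Re \<dots> \<le> cmod \<dots>"
    by (rule complex_Re_le_cmod)
  also have "\<dots> = cmod (?E (\<lambda>r. cis (t * selected_sum L c r)))"
    by (simp add: norm_mult)
  also have "\<dots> = (\<Prod>l\<in>L. cmod (of_real (1 - p) + of_real p * cis (t * c l)))"
    by (simp add: expectation_cis_selected_sum assms prod_norm)
  also have "\<dots> \<le> (\<Prod>l\<in>L. exp (- (p * (1 - p) * (t * c l)\<^sup>2 / 4)))"
    using norm_bernoulli_charfun_le assms(2,3,5) by (intro prod_mono) auto
  also have "\<dots> = exp (\<Sum>l\<in>L. - (p * (1 - p) / 4 * t\<^sup>2) * (c l)\<^sup>2)"
    by (simp add: exp_sum[OF assms(1)] power_mult_distrib mult.assoc)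
  also have "\<dots> = exp (- (p * (1 - p) / 4 * t\<^sup>2) * (\<Sum>l\<in>L. (c l)\<^sup>2))"
    by (simp only: sum_distrib_left)
  finally show ?thesis
    using assms(4) by simp
qed

lemma indicator_le_fejer_sum:
  assumes "0 < \<rho>" "0 < N"
  shows "of_bool (\<bar>x\<bar> \<le> \<rho>)
      \<le> 2 / (real N)\<^sup>2 * (\<Sum>j<N. \<Sum>j'<N. cos ((real j - real j') / (2 * real N * \<rho>) * x))"
proof -
  have kernel: "(\<Sum>j<N. \<Sum>j'<N. cos ((real j - real j') / (2 * real N * \<rho>) * x)) =
      (\<Sum>j<N. \<Sum>j'<N. cos ((real j - real j') * (x / (2 * real N * \<rho>))))"
    by simp
  show ?thesis
  proof (cases "\<bar>x\<bar> \<le> \<rho>")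
    case True
    have "\<bar>x / (2 * real N * \<rho>)\<bar> * real N = \<bar>x\<bar> / (2 * \<rho>)"
      using assms by (simp add: abs_divide abs_mult field_simps)
    also have "\<dots> \<le> 1/2"
      using True assms by (simp add: field_simps)
    finally have "(real N)\<^sup>2 / 2 \<le> (\<Sum>j<N. \<Sum>j'<N. cos ((real j - real j') * (x / (2 * real N * \<rho>))))"
      by (rule sum_cos_diff_ge)
    then show ?thesis
      using True assms unfolding kernel by (simp add: field_simps)
  next
    case False
    have "0 \<le> (\<Sum>j<N. \<Sum>j'<N. cos ((real j - real j') / (2 * real N * \<rho>) * x))"
      unfolding kernel sum_cos_diff_eq_sq by simp
    then show ?thesis
      using False by simp
  qed
qed

definition small_ball_const :: "real \<Rightarrow> real" where
  "small_ball_const p = 4 + 128 / (p * (1 - p))"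

lemma small_ball_const_pos: "0 < p \<Longrightarrow> p < 1 \<Longrightarrow> 0 < small_ball_const p"
  unfolding small_ball_const_def by (simp add: add_pos_nonneg)

lemma small_ball_const_bound:
  assumes p: "0 < p" "p < 1" and \<rho>: "0 < \<rho>" "\<rho> \<le> 1"
    and N: "1 / \<rho> \<le> real N" "real N \<le> 1 / \<rho> + 1"
  shows "2 / (real N)\<^sup>2 * (2 * real N * (1 + 1 / (p * (1 - p) / (16 * (real N)\<^sup>2 * \<rho>\<^sup>2))))
    \<le> small_ball_const p * \<rho>"
proof -
  have N_pos: "0 < real N"
    using \<rho> N(1) by (meson divide_pos_pos order_less_le_trans zero_less_one)
  have "2 / (real N)\<^sup>2 * (2 * real N * (1 + 1 / (p * (1 - p) / (16 * (real N)\<^sup>2 * \<rho>\<^sup>2))))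
      = 4 / real N + 64 / (p * (1 - p)) * (real N * \<rho>) * \<rho>"
    using N_pos \<rho> p by (simp add: field_simps power2_eq_square)
  also have "\<dots> \<le> 4 * \<rho> + 64 / (p * (1 - p)) * 2 * \<rho>"
  proof (intro add_mono mult_right_mono mult_left_mono)
    show "4 / real N \<le> 4 * \<rho>"
      using N(1) \<rho> N_pos by (simp add: field_simps)
    show "real N * \<rho> \<le> 2"
      using N(2) \<rho> by (simp add: field_simps)
  qed (use p \<rho> in auto)
  also have "\<dots> = small_ball_const p * \<rho>"
    unfolding small_ball_const_def by (simp add: field_simps)
  finally show ?thesis .
qed

(* Esseen's argument: the indicator of [-rho, rho] is dominated by a nonnegative trigonometric
   polynomial whose frequencies t all satisfy |t c l| <= 1, and at such frequencies the
   characteristic function of the Bernoulli sum decays like exp (- p (1 - p) t^2 / 4). *)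
lemma small_ball_selected_sum:
  assumes p: "0 < p" "p < 1" and \<rho>: "0 < \<rho>" "\<rho> \<le> 1" and L: "finite L"
    and c_sq: "(\<Sum>l\<in>L. (c l)\<^sup>2) = 1" and c_small: "\<And>l. l \<in> L \<Longrightarrow> \<bar>c l\<bar> \<le> 2 * \<rho>"
  shows "measure_pmf.prob (bernoulli_vec L p) {r. \<bar>selected_sum L c r - b\<bar> \<le> \<rho>}
     \<le> small_ball_const p * \<rho>"
proof -
  let ?E = "measure_pmf.expectation (bernoulli_vec L p)"
  let ?S = "selected_sum L c"
  define N where "N = nat \<lceil>1 / \<rho>\<rceil>"
  have "0 < 1 / \<rho>"
    using \<rho> by simp
  then have "0 \<le> \<lceil>1 / \<rho>\<rceil>"
    by linarith
  then have N: "1 / \<rho> \<le> real N" "real N \<le> 1 / \<rho> + 1"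
    unfolding N_def using ceiling_correct[of "1 / \<rho>"] by linarith+
  then have N_pos: "0 < real N"
    using \<rho> by (meson divide_pos_pos order_less_le_trans zero_less_one)
  define t where "t j j' = (real j - real j') / (2 * real N * \<rho>)" for j j' :: nat
  define \<alpha> where "\<alpha> = p * (1 - p) / (16 * (real N)\<^sup>2 * \<rho>\<^sup>2)"
  have \<alpha>_pos: "0 < \<alpha>"
    unfolding \<alpha>_def using p \<rho> N_pos by simp
  have t_small: "\<bar>t j j' * c l\<bar> \<le> 1" if "j < N" "j' < N" "l \<in> L" for j j' l
  proof -
    have "\<bar>real j - real j'\<bar> \<le> real N"
      using that by linarith
    have "\<bar>t j j'\<bar> = \<bar>real j - real j'\<bar> / (2 * real N * \<rho>)"
      unfolding t_def using N_pos \<rho> by (simp add: abs_divide)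
    also have "\<dots> \<le> real N / (2 * real N * \<rho>)"
      using \<open>\<bar>real j - real j'\<bar> \<le> real N\<close> N_pos \<rho> by (intro divide_right_mono) auto
    also have "\<dots> = 1 / (2 * \<rho>)"
      using N_pos by simp
    finally have "\<bar>t j j'\<bar> * \<bar>c l\<bar> \<le> 1 / (2 * \<rho>) * (2 * \<rho>)"
      using c_small[OF that(3)] by (intro mult_mono) auto
    then show ?thesis
      using \<rho> by (simp add: abs_mult)
  qed
  have exp_t: "- (p * (1 - p) / 4 * (t j j')\<^sup>2) = - \<alpha> * (real j - real j')\<^sup>2" for j j'
    unfolding \<alpha>_def t_def using N_pos \<rho> by (simp add: power_divide field_simps power2_eq_square)
  have "measure_pmf.prob (bernoulli_vec L p) {r. \<bar>?S r - b\<bar> \<le> \<rho>} = ?E (indicator {r. \<bar>?S r - b\<bar> \<le> \<rho>})"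
    by simp
  also have "indicator {r. \<bar>?S r - b\<bar> \<le> \<rho>} = (\<lambda>r. of_bool (\<bar>?S r - b\<bar> \<le> \<rho>) :: real)"
    by (auto simp: indicator_def)
  also have "?E \<dots> \<le> ?E (\<lambda>r. 2 / (real N)\<^sup>2 * (\<Sum>j<N. \<Sum>j'<N. cos (t j j' * (?S r - b))))"
    unfolding t_def using \<rho> N_pos
    by (intro integral_mono integrable_Pi_pmf L indicator_le_fejer_sum) auto
  also have "\<dots> = 2 / (real N)\<^sup>2 * (\<Sum>j<N. \<Sum>j'<N. ?E (\<lambda>r. cos (t j j' * (?S r - b))))"
    by (simp add: Bochner_Integration.integral_sum integrable_Pi_pmf[OF L])
  also have "\<dots> \<le> 2 / (real N)\<^sup>2 * (\<Sum>j<N. \<Sum>j'<N. exp (- (p * (1 - p) / 4 * (t j j')\<^sup>2)))"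
    using p by (intro mult_left_mono sum_mono expectation_cos_selected_sum_le L c_sq t_small) auto
  also have "\<dots> = 2 / (real N)\<^sup>2 * (\<Sum>j<N. \<Sum>j'<N. exp (- \<alpha> * (real j - real j')\<^sup>2))"
    by (simp only: exp_t)
  also have "\<dots> \<le> 2 / (real N)\<^sup>2 * (2 * real N * (1 + 1 / \<alpha>))"
    by (intro mult_left_mono sum_exp_neg_sq_diff_le \<alpha>_pos) simp
  also have "\<dots> \<le> small_ball_const p * \<rho>"
    unfolding \<alpha>_def using small_ball_const_bound[OF p \<rho> N] by simp
  finally show ?thesis .
qed

section \<open>Vectors, Parseval frames and orthogonal projections\<close>

(* Vectors of R^K are functions nat => real of which only the coordinates below K are read. *)
definition dot :: "nat \<Rightarrow> (nat \<Rightarrow> real) \<Rightarrow> (nat \<Rightarrow> real) \<Rightarrow> real" where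
  "dot K x y = (\<Sum>j<K. x j * y j)"

definition lincomb :: "'i set \<Rightarrow> ('i \<Rightarrow> real) \<Rightarrow> ('i \<Rightarrow> nat \<Rightarrow> real) \<Rightarrow> nat \<Rightarrow> real" where
  "lincomb L c u = (\<lambda>j. \<Sum>l\<in>L. c l * u l j)"

lemma dot_commute: "dot K x y = dot K y x"
  unfolding dot_def by (simp add: mult.commute)

lemma dot_self_nonneg: "0 \<le> dot K x x"
  unfolding dot_def by (intro sum_nonneg) simp

lemma dot_cong_left: "(\<And>j. j < K \<Longrightarrow> x j = x' j) \<Longrightarrow> dot K x y = dot K x' y"
  unfolding dot_def by (intro sum.cong) auto

lemma dot_diff_left: "dot K (\<lambda>j. x j - y j) z = dot K x z - dot K y z"
  unfolding dot_def by (simp add: sum_subtractf left_diff_distrib)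

lemma dot_diff_right: "dot K x (\<lambda>j. y j - z j) = dot K x y - dot K x z"
  unfolding dot_def by (simp add: sum_subtractf right_diff_distrib)

lemma dot_diff_scaled_left: "dot K (\<lambda>j. x j - c * y j) z = dot K x z - c * dot K y z"
  unfolding dot_def by (simp add: sum_subtractf sum_distrib_left left_diff_distrib mult.assoc)

lemma dot_add_scaled_left: "dot K (\<lambda>j. x j + c * y j) z = dot K x z + c * dot K y z"
  unfolding dot_def by (simp add: sum.distrib sum_distrib_left distrib_right mult.assoc)

lemma dot_lincomb_left: "dot K (lincomb L c u) y = (\<Sum>l\<in>L. c l * dot K (u l) y)"
  unfolding dot_def lincomb_def
  by (simp add: sum_distrib_left sum_distrib_right sum.swap[of _ L] mult.assoc)

lemma dot_Cauchy_Schwarz: "(dot K x y)\<^sup>2 \<le> dot K x x * dot K y y"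
  unfolding dot_def using Cauchy_Schwarz_ineq_sum[of x y "{..<K}"] by (simp add: power2_eq_square)

lemma dot_diff_self_le:
  "dot K (\<lambda>j. x j - y j) (\<lambda>j. x j - y j) \<le> 2 * dot K x x + 2 * dot K y y"
proof -
  have "(x j - y j) * (x j - y j) \<le> 2 * (x j * x j) + 2 * (y j * y j)" for j
    using sum_squares_ge_zero[of "x j + y j" 0] by (simp add: algebra_simps power2_eq_square)
  then have "(\<Sum>j<K. (x j - y j) * (x j - y j)) \<le> (\<Sum>j<K. 2 * (x j * x j) + 2 * (y j * y j))"
    by (intro sum_mono)
  then show ?thesis
    unfolding dot_def by (simp add: sum.distrib sum_distrib_left)
qed

definition proj_perp :: "nat \<Rightarrow> (nat \<Rightarrow> real) \<Rightarrow> (nat \<Rightarrow> real) \<Rightarrow> nat \<Rightarrow> real" where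
  "proj_perp K v x = (\<lambda>j. x j - dot K x v / dot K v v * v j)"

lemma dot_proj_perp_left_self: "dot K v v \<noteq> 0 \<Longrightarrow> dot K (proj_perp K v x) v = 0"
  unfolding proj_perp_def dot_diff_scaled_left by simp

lemma dot_proj_perp_right_orth:
  assumes "dot K x v = 0"
  shows "dot K x (proj_perp K v y) = dot K x y"
proof -
  have "dot K (proj_perp K v y) x = dot K y x - dot K y v / dot K v v * dot K v x"
    unfolding proj_perp_def by (rule dot_diff_scaled_left)
  then show ?thesis
    using assms by (simp add: dot_commute)
qed

lemma proj_perp_orth: "dot K x v = 0 \<Longrightarrow> proj_perp K v x = x"
  unfolding proj_perp_def by simp

lemma proj_perp_self: "dot K v v \<noteq> 0 \<Longrightarrow> proj_perp K v v = (\<lambda>_. 0)"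
  unfolding proj_perp_def by simp

lemma dot_proj_perp:
  assumes "dot K v v \<noteq> 0"
  shows "dot K (proj_perp K v x) (proj_perp K v y) = dot K x y - dot K x v * dot K y v / dot K v v"
proof -
  have "dot K (proj_perp K v x) (proj_perp K v y) = dot K (proj_perp K v x) y"
    by (rule dot_proj_perp_right_orth[OF dot_proj_perp_left_self[OF assms]])
  also have "\<dots> = dot K x y - dot K x v / dot K v v * dot K v y"
    unfolding proj_perp_def by (rule dot_diff_scaled_left)
  finally show ?thesis
    by (simp add: dot_commute[of K v y])
qed

lemma dot_proj_perp_self_le:
  assumes "0 < dot K v v"
  shows "dot K (proj_perp K v x) (proj_perp K v x) \<le> dot K x x"
  using dot_proj_perp[of K v x x] assms by simp

lemma proj_perp_cong:
  "(\<And>j. j < K \<Longrightarrow> x j = x' j) \<Longrightarrow> j < K \<Longrightarrow> proj_perp K v x j = proj_perp K v x' j"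
  unfolding proj_perp_def using dot_cong_left[of K x x' v] by simp

lemma proj_perp_diff: "proj_perp K v (\<lambda>j. x j - y j) = (\<lambda>j. proj_perp K v x j - proj_perp K v y j)"
  unfolding proj_perp_def dot_diff_left by (simp add: fun_eq_iff diff_divide_distrib algebra_simps)

lemma proj_perp_add_scaled_self:
  "dot K v v \<noteq> 0 \<Longrightarrow> proj_perp K v (\<lambda>j. x j + c * v j) = proj_perp K v x"
  unfolding proj_perp_def dot_add_scaled_left by (simp add: add_divide_distrib distrib_right)

lemma proj_perp_lincomb: "proj_perp K v (lincomb L c u) = lincomb L c (\<lambda>l. proj_perp K v (u l))"
  unfolding proj_perp_def dot_lincomb_left
  by (simp add: lincomb_def fun_eq_iff right_diff_distrib sum_subtractf sum_divide_distrib
      sum_distrib_left mult_ac)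

definition frame_fixes :: "nat \<Rightarrow> 'i set \<Rightarrow> ('i \<Rightarrow> nat \<Rightarrow> real) \<Rightarrow> (nat \<Rightarrow> real) \<Rightarrow> bool" where
  "frame_fixes K L u x \<longleftrightarrow> (\<forall>j<K. lincomb L (\<lambda>l. dot K x (u l)) u j = x j)"

(* The frame operator x |-> sum_l <x, u l> u l is the identity on the span of the u l, so
   sum_l |u l|^2, the trace of this orthogonal projection, is the dimension of the span. *)
definition parseval_frame :: "nat \<Rightarrow> 'i set \<Rightarrow> ('i \<Rightarrow> nat \<Rightarrow> real) \<Rightarrow> bool" where
  "parseval_frame K L u \<longleftrightarrow> (\<forall>m\<in>L. frame_fixes K L u (u m))"

lemma frame_fixes_sum_dot:
  assumes "frame_fixes K L u x"
  shows "(\<Sum>l\<in>L. dot K x (u l) * dot K y (u l)) = dot K x y"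
proof -
  have "dot K x y = dot K (lincomb L (\<lambda>l. dot K x (u l)) u) y"
    using assms unfolding frame_fixes_def by (intro dot_cong_left) auto
  also have "\<dots> = (\<Sum>l\<in>L. dot K x (u l) * dot K (u l) y)"
    by (rule dot_lincomb_left)
  finally show ?thesis
    by (simp add: dot_commute[of K _ y])
qed

lemma frame_fixes_diff_scaled:
  assumes "frame_fixes K L u x" "frame_fixes K L u y"
  shows "frame_fixes K L u (\<lambda>j. x j - c * y j)"
  unfolding frame_fixes_def
proof (intro allI impI)
  fix j
  assume "j < K"
  have "lincomb L (\<lambda>l. dot K (\<lambda>j. x j - c * y j) (u l)) u j
      = lincomb L (\<lambda>l. dot K x (u l)) u j - c * lincomb L (\<lambda>l. dot K y (u l)) u j"
    by (simp add: lincomb_def dot_diff_scaled_left left_diff_distrib sum_subtractf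
        sum_distrib_left mult.assoc)
  also have "\<dots> = x j - c * y j"
    using assms \<open>j < K\<close> unfolding frame_fixes_def by simp
  finally show "lincomb L (\<lambda>l. dot K (\<lambda>j. x j - c * y j) (u l)) u j = x j - c * y j" .
qed

lemma parseval_frame_proj_perp:
  assumes L: "finite L" and frame: "parseval_frame K L u" and l0: "l0 \<in> L"
    and pos: "0 < dot K (u l0) (u l0)"
  shows "parseval_frame K (L - {l0}) (\<lambda>l. proj_perp K (u l0) (u l))"
  unfolding parseval_frame_def frame_fixes_def
proof (intro ballI allI impI)
  fix m j
  assume "m \<in> L - {l0}" "j < K"
  let ?v = "u l0" and ?P = "proj_perp K (u l0)"
  define x where "x = ?P (u m)"
  have x_orth: "dot K x ?v = 0"
    unfolding x_def using pos by (simp add: dot_proj_perp_left_self)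
  have x_fixed: "frame_fixes K L u x"
    unfolding x_def using frame \<open>m \<in> L - {l0}\<close> l0
    unfolding proj_perp_def by (intro frame_fixes_diff_scaled) (auto simp: parseval_frame_def)
  have "lincomb (L - {l0}) (\<lambda>l. dot K x (?P (u l))) (\<lambda>l. ?P (u l)) j
      = lincomb L (\<lambda>l. dot K x (?P (u l))) (\<lambda>l. ?P (u l)) j"
    using L l0 pos by (simp add: lincomb_def sum.remove proj_perp_self)
  also have "\<dots> = ?P (lincomb L (\<lambda>l. dot K x (u l)) u) j"
    by (simp add: dot_proj_perp_right_orth[OF x_orth] proj_perp_lincomb)
  also have "\<dots> = ?P x j"
    using x_fixed \<open>j < K\<close> unfolding frame_fixes_def by (intro proj_perp_cong) auto
  also have "\<dots> = x j"
    by (simp add: proj_perp_orth[OF x_orth])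
  finally show "lincomb (L - {l0}) (\<lambda>l. dot K (?P (u m)) (?P (u l))) (\<lambda>l. ?P (u l)) j = ?P (u m) j"
    unfolding x_def .
qed

lemma parseval_frame_proj_perp_trace:
  assumes L: "finite L" and frame: "parseval_frame K L u" and l0: "l0 \<in> L"
    and pos: "0 < dot K (u l0) (u l0)"
  shows "(\<Sum>l\<in>L - {l0}. dot K (proj_perp K (u l0) (u l)) (proj_perp K (u l0) (u l)))
       = (\<Sum>l\<in>L. dot K (u l) (u l)) - 1"
proof -
  let ?v = "u l0" and ?P = "proj_perp K (u l0)"
  have "?P ?v = (\<lambda>_. 0)"
    using pos by (intro proj_perp_self) simp
  then have "dot K (?P ?v) (?P ?v) = 0"
    by (simp add: dot_def)
  then have "(\<Sum>l\<in>L - {l0}. dot K (?P (u l)) (?P (u l))) = (\<Sum>l\<in>L. dot K (?P (u l)) (?P (u l)))"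
    using L l0 by (simp add: sum.remove)
  also have "\<dots> = (\<Sum>l\<in>L. dot K (u l) (u l) - dot K ?v (u l) * dot K ?v (u l) / dot K ?v ?v)"
    using pos by (intro sum.cong refl) (simp add: dot_proj_perp dot_commute)
  also have "\<dots> = (\<Sum>l\<in>L. dot K (u l) (u l)) - (\<Sum>l\<in>L. dot K ?v (u l) * dot K ?v (u l)) / dot K ?v ?v"
    by (simp add: sum_subtractf sum_divide_distrib)
  also have "(\<Sum>l\<in>L. dot K ?v (u l) * dot K ?v (u l)) = dot K ?v ?v"
    using frame l0 unfolding parseval_frame_def by (intro frame_fixes_sum_dot) auto
  finally show ?thesis
    using pos by simp
qed

section \<open>Small balls for random subsums of a Parseval frame\<close>

definition selected_vec :: "'i set \<Rightarrow> ('i \<Rightarrow> nat \<Rightarrow> real) \<Rightarrow> ('i \<Rightarrow> bool) \<Rightarrow> nat \<Rightarrow> real" where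
  "selected_vec L u r = (\<lambda>j. selected_sum L (\<lambda>l. u l j) r)"

definition dist_sq :: "nat \<Rightarrow> (nat \<Rightarrow> real) \<Rightarrow> (nat \<Rightarrow> real) \<Rightarrow> real" where
  "dist_sq K x y = dot K (\<lambda>j. x j - y j) (\<lambda>j. x j - y j)"

lemma selected_vec_eq_lincomb: "selected_vec L u r = lincomb L (\<lambda>l. of_bool (r l)) u"
  by (simp add: selected_vec_def selected_sum_def lincomb_def)

lemma dot_selected_vec: "dot K w (selected_vec L u r) = selected_sum L (\<lambda>l. dot K w (u l)) r"
proof -
  have "dot K (selected_vec L u r) w = (\<Sum>l\<in>L. of_bool (r l) * dot K (u l) w)"
    unfolding selected_vec_eq_lincomb by (rule dot_lincomb_left)
  then show ?thesis
    unfolding selected_sum_def by (simp add: dot_commute)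
qed

lemma proj_perp_selected_vec:
  "proj_perp K v (selected_vec L u r) = selected_vec L (\<lambda>l. proj_perp K v (u l)) r"
  unfolding selected_vec_eq_lincomb by (rule proj_perp_lincomb)

lemma small_ball_frame_spread:
  assumes p: "0 < p" "p < 1" and \<rho>: "0 < \<rho>" "\<rho> \<le> 1"
    and L: "finite L" and frame: "parseval_frame K L u"
    and l0: "l0 \<in> L" "0 < dot K (u l0) (u l0)"
    and short: "\<And>l. l \<in> L \<Longrightarrow> dot K (u l) (u l) \<le> 4 * \<rho>\<^sup>2"
  shows "measure_pmf.prob (bernoulli_vec L p) {r. dist_sq K (selected_vec L u r) a \<le> \<rho>\<^sup>2}
     \<le> small_ball_const p * \<rho>"
proof -
  define s where "s = dot K (u l0) (u l0)"
  define w where "w j = u l0 j / sqrt s" for j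
  define c where "c = (\<lambda>l. dot K w (u l))"
  have dot_w: "dot K w y = dot K (u l0) y / sqrt s" for y
    unfolding w_def dot_def by (simp add: sum_divide_distrib)
  have "dot K w w = dot K w (u l0) / sqrt s"
    by (subst dot_w) (rule arg_cong[OF dot_commute])
  also have "\<dots> = s / sqrt s / sqrt s"
    by (simp add: dot_w s_def)
  finally have w_unit: "dot K w w = 1"
    using l0(2) s_def by simp
  have c_sq: "(\<Sum>l\<in>L. (c l)\<^sup>2) = 1"
  proof -
    have "(\<Sum>l\<in>L. (c l)\<^sup>2) = (\<Sum>l\<in>L. dot K (u l0) (u l) * dot K (u l0) (u l)) / s"
      unfolding c_def dot_w using l0(2) s_def
      by (simp add: power_divide power2_eq_square sum_divide_distrib)
    also have "(\<Sum>l\<in>L. dot K (u l0) (u l) * dot K (u l0) (u l)) = s"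
      unfolding s_def using frame l0(1) by (intro frame_fixes_sum_dot) (auto simp: parseval_frame_def)
    finally show ?thesis
      using l0(2) s_def by simp
  qed
  have c_small: "\<bar>c l\<bar> \<le> 2 * \<rho>" if "l \<in> L" for l
  proof -
    have "(c l)\<^sup>2 \<le> dot K w w * dot K (u l) (u l)"
      unfolding c_def by (rule dot_Cauchy_Schwarz)
    also have "\<dots> \<le> (2 * \<rho>)\<^sup>2"
      using short[OF that] w_unit by (simp add: power_mult_distrib)
    finally show ?thesis
      using \<rho> by (metis abs_le_square_iff abs_of_pos mult_pos_pos zero_less_numeral)
  qed
  have "{r. dist_sq K (selected_vec L u r) a \<le> \<rho>\<^sup>2} \<subseteq> {r. \<bar>selected_sum L c r - dot K w a\<bar> \<le> \<rho>}"
  proof safe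
    fix r
    assume close: "dist_sq K (selected_vec L u r) a \<le> \<rho>\<^sup>2"
    have "selected_sum L c r - dot K w a = dot K w (\<lambda>j. selected_vec L u r j - a j)"
      by (simp add: dot_diff_right dot_selected_vec c_def)
    then have "(selected_sum L c r - dot K w a)\<^sup>2 \<le> \<rho>\<^sup>2"
      using dot_Cauchy_Schwarz[of K w "\<lambda>j. selected_vec L u r j - a j"] w_unit close
      by (simp add: dist_sq_def)
    then show "\<bar>selected_sum L c r - dot K w a\<bar> \<le> \<rho>"
      using \<rho> by (metis abs_le_square_iff abs_of_pos)
  qed
  then have "measure_pmf.prob (bernoulli_vec L p) {r. dist_sq K (selected_vec L u r) a \<le> \<rho>\<^sup>2}
      \<le> measure_pmf.prob (bernoulli_vec L p) {r. \<bar>selected_sum L c r - dot K w a\<bar> \<le> \<rho>}"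
    by (intro measure_pmf.finite_measure_mono) simp_all
  also have "\<dots> \<le> small_ball_const p * \<rho>"
    by (rule small_ball_selected_sum[OF p \<rho> L c_sq c_small])
  finally show ?thesis .
qed

lemma selected_vec_insert_upd:
  assumes "finite L" "l \<notin> L"
  shows "selected_vec (insert l L) u (r(l := y)) = (\<lambda>j. selected_vec L u r j + of_bool y * u l j)"
  using assms by (simp add: selected_vec_def selected_sum_insert_upd fun_eq_iff)

(* The centres for r l0 = False and r l0 = True are |u l0| > 2 rho apart, so the two conditional
   events are disjoint; projecting orthogonally to u l0 maps both into the same smaller event. *)
lemma small_ball_condition_long:
  assumes p: "0 \<le> p" "p \<le> 1/2" and L: "finite L" and l0: "l0 \<in> L"
    and long: "4 * \<rho>\<^sup>2 < dot K (u l0) (u l0)"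
  shows "measure_pmf.prob (bernoulli_vec L p) {r. dist_sq K (selected_vec L u r) a \<le> \<rho>\<^sup>2}
    \<le> (1 - p) * measure_pmf.prob (bernoulli_vec (L - {l0}) p)
         {r. dist_sq K (selected_vec (L - {l0}) (\<lambda>l. proj_perp K (u l0) (u l)) r) (proj_perp K (u l0) a)
             \<le> \<rho>\<^sup>2}"
proof -
  let ?v = "u l0" and ?P = "proj_perp K (u l0)" and ?L' = "L - {l0}"
  define E where "E = {r. dist_sq K (selected_vec L u r) a \<le> \<rho>\<^sup>2}"
  define B where "B = {r. dist_sq K (selected_vec ?L' (\<lambda>l. ?P (u l)) r) (?P a) \<le> \<rho>\<^sup>2}"
  have L': "finite ?L'" "l0 \<notin> ?L'" "L = insert l0 ?L'"
    using L l0 by auto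
  have pos: "0 < dot K ?v ?v"
    using long zero_le_power2[of \<rho>] by linarith
  have upd: "selected_vec L u (r(l0 := y)) = (\<lambda>j. selected_vec ?L' u r j + of_bool y * ?v j)" for r y
    using selected_vec_insert_upd[OF L'(1,2), of u r y] l0 by (simp add: insert_absorb)
  then have shift: "(\<lambda>j. selected_vec L u (r(l0 := y)) j - a j)
      = (\<lambda>j. (selected_vec ?L' u r j - a j) + of_bool y * ?v j)" for r y
    by (simp add: fun_eq_iff)
  have "{r. r(l0 := y) \<in> E} \<subseteq> B" for y
  proof
    fix r
    assume "r \<in> {r. r(l0 := y) \<in> E}"
    let ?z = "\<lambda>j. selected_vec ?L' u r j - a j"
    have "?P (\<lambda>j. ?z j + of_bool y * ?v j) = (\<lambda>j. selected_vec ?L' (\<lambda>l. ?P (u l)) r j - ?P a j)"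
      using pos by (simp add: proj_perp_add_scaled_self proj_perp_diff proj_perp_selected_vec)
    moreover have "dot K (?P (\<lambda>j. ?z j + of_bool y * ?v j)) (?P (\<lambda>j. ?z j + of_bool y * ?v j))
        \<le> dot K (\<lambda>j. ?z j + of_bool y * ?v j) (\<lambda>j. ?z j + of_bool y * ?v j)"
      using pos by (rule dot_proj_perp_self_le)
    ultimately show "r \<in> B"
      using \<open>r \<in> {r. r(l0 := y) \<in> E}\<close> by (simp add: E_def B_def dist_sq_def shift)
  qed
  moreover have "{r. r(l0 := False) \<in> E} \<inter> {r. r(l0 := True) \<in> E} = {}"
  proof safe
    fix r
    assume "r(l0 := False) \<in> E" "r(l0 := True) \<in> E"
    moreover have "dot K ?v ?v \<le> 2 * dist_sq K (selected_vec L u (r(l0 := True))) a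
        + 2 * dist_sq K (selected_vec L u (r(l0 := False))) a"
      using dot_diff_self_le[of K "\<lambda>j. selected_vec ?L' u r j + ?v j - a j"
          "\<lambda>j. selected_vec ?L' u r j - a j"]
      by (simp add: dist_sq_def upd)
    ultimately show "r \<in> {}"
      using long by (simp add: E_def)
  qed
  ultimately show ?thesis
    unfolding E_def[symmetric] B_def[symmetric] using L'(3)
    by (metis prob_bernoulli_vec_insert_disjoint_le[OF L'(1,2) p])
qed

lemma small_ball_parseval_frame:
  assumes p: "0 < p" "p \<le> 1/2" and \<rho>: "0 < \<rho>" "\<rho> \<le> 1" and q: "1 - p \<le> q" "q \<le> 1"
    and small: "small_ball_const p * \<rho> \<le> q ^ D"
  shows "finite L \<Longrightarrow> parseval_frame K L u \<Longrightarrow> (\<Sum>l\<in>L. dot K (u l) (u l)) = real d \<Longrightarrow> d \<le> D \<Longrightarrow>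
    measure_pmf.prob (bernoulli_vec L p) {r. dist_sq K (selected_vec L u r) a \<le> \<rho>\<^sup>2} \<le> q ^ d"
proof (induction d arbitrary: L u a)
  case 0
  then show ?case
    by (simp add: measure_pmf.prob_le_1)
next
  case (Suc d)
  note L = \<open>finite L\<close> and frame = \<open>parseval_frame K L u\<close>
  have q_nonneg: "0 \<le> q"
    using p q by linarith
  consider (long) l0 where "l0 \<in> L" "4 * \<rho>\<^sup>2 < dot K (u l0) (u l0)"
    | (short) "\<And>l. l \<in> L \<Longrightarrow> dot K (u l) (u l) \<le> 4 * \<rho>\<^sup>2"
    by (meson not_less)
  then show ?case
  proof cases
    case long
    let ?P = "proj_perp K (u l0)"
    have pos: "0 < dot K (u l0) (u l0)"
      using long zero_le_power2[of \<rho>] by linarith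
    have IH: "measure_pmf.prob (bernoulli_vec (L - {l0}) p)
        {r. dist_sq K (selected_vec (L - {l0}) (\<lambda>l. ?P (u l)) r) (?P a) \<le> \<rho>\<^sup>2} \<le> q ^ d"
    proof (rule Suc.IH)
      show "parseval_frame K (L - {l0}) (\<lambda>l. ?P (u l))"
        by (rule parseval_frame_proj_perp[OF L frame long(1) pos])
      show "(\<Sum>l\<in>L - {l0}. dot K (?P (u l)) (?P (u l))) = real d"
        using parseval_frame_proj_perp_trace[OF L frame long(1) pos] Suc.prems(3) by simp
    qed (use L Suc.prems(4) in auto)
    have "measure_pmf.prob (bernoulli_vec L p) {r. dist_sq K (selected_vec L u r) a \<le> \<rho>\<^sup>2}
        \<le> (1 - p) * measure_pmf.prob (bernoulli_vec (L - {l0}) p)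
          {r. dist_sq K (selected_vec (L - {l0}) (\<lambda>l. ?P (u l)) r) (?P a) \<le> \<rho>\<^sup>2}"
      using p by (intro small_ball_condition_long L long) auto
    also have "\<dots> \<le> (1 - p) * q ^ d"
      using IH p by (intro mult_left_mono) auto
    also have "\<dots> \<le> q ^ Suc d"
      using q q_nonneg by (simp add: mult_right_mono)
    finally show ?thesis .
  next
    case short
    have "\<exists>l\<in>L. 0 < dot K (u l) (u l)"
    proof (rule ccontr)
      assume "\<not> (\<exists>l\<in>L. 0 < dot K (u l) (u l))"
      then have "(\<Sum>l\<in>L. dot K (u l) (u l)) \<le> 0"
        by (intro sum_nonpos) (simp add: not_less)
      then show False
        using Suc.prems(3) by simp
    qed
    then obtain l0 where l0: "l0 \<in> L" "0 < dot K (u l0) (u l0)"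
      by blast
    have "measure_pmf.prob (bernoulli_vec L p) {r. dist_sq K (selected_vec L u r) a \<le> \<rho>\<^sup>2}
        \<le> small_ball_const p * \<rho>"
      using p by (intro small_ball_frame_spread[OF _ _ \<rho> L frame l0 short]) auto
    also have "\<dots> \<le> q ^ D"
      by (rule small)
    also have "\<dots> \<le> q ^ Suc d"
      using Suc.prems(4) q_nonneg q(2) by (rule power_decreasing)
    finally show ?thesis .
  qed
qed

definition sq_norm_mult_row :: "nat \<Rightarrow> nat \<Rightarrow> (nat \<Rightarrow> nat \<Rightarrow> real) \<Rightarrow> (nat \<Rightarrow> bool) \<Rightarrow> real" where
  "sq_norm_mult_row n k V r = dot k (selected_vec {..<n} V r) (selected_vec {..<n} V r)"

lemma sq_norm_mult_row_nonneg: "0 \<le> sq_norm_mult_row n k V r"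
  unfolding sq_norm_mult_row_def by (rule dot_self_nonneg)

lemma hs_norm_prod_eq:
  "hs_norm_prod m n k M V = sqrt (\<Sum>i<m. sq_norm_mult_row n k V (\<lambda>l. M (i, l)))"
  by (simp add: hs_norm_prod_def sq_norm_mult_row_def dot_def selected_vec_def selected_sum_def
      entry_def power2_eq_square)

lemma parseval_frame_orthonormal_cols:
  assumes "orthonormal_cols n k V"
  shows "parseval_frame k {..<n} V"
  unfolding parseval_frame_def frame_fixes_def
proof (intro ballI allI impI)
  fix m j
  assume "j < k"
  have "lincomb {..<n} (\<lambda>l. dot k (V m) (V l)) V j = (\<Sum>j'<k. V m j' * (\<Sum>l<n. V l j' * V l j))"
    unfolding lincomb_def dot_def
    by (simp add: sum_distrib_left sum_distrib_right mult.assoc sum.swap[of _ "{..<n}"])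
  also have "\<dots> = (\<Sum>j'<k. V m j' * of_bool (j' = j))"
    using assms \<open>j < k\<close> unfolding orthonormal_cols_def by (intro sum.cong refl) auto
  also have "\<dots> = V m j"
    using \<open>j < k\<close> by simp
  finally show "lincomb {..<n} (\<lambda>l. dot k (V m) (V l)) V j = V m j" .
qed

lemma trace_orthonormal_cols:
  assumes "orthonormal_cols n k V"
  shows "(\<Sum>l<n. dot k (V l) (V l)) = real k"
proof -
  have "(\<Sum>l<n. dot k (V l) (V l)) = (\<Sum>j<k. \<Sum>l<n. V l j * V l j)"
    unfolding dot_def by (rule sum.swap)
  also have "\<dots> = (\<Sum>j<k. 1)"
    using assms unfolding orthonormal_cols_def by (intro sum.cong refl) auto
  finally show ?thesis
    by simp
qed

lemma small_ball_row:
  assumes p: "0 < p" "p \<le> 1/2" and \<rho>: "0 < \<rho>" "\<rho> \<le> 1"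
    and small: "small_ball_const p * \<rho> \<le> (1 - p) ^ k" and V: "orthonormal_cols n k V"
  shows "measure_pmf.prob (bernoulli_vec {..<n} p) {r. sq_norm_mult_row n k V r \<le> \<rho>\<^sup>2} \<le> (1 - p) ^ k"
  using small_ball_parseval_frame[OF p \<rho> order.refl _ small, of "{..<n}" k V k "\<lambda>_. 0"]
    parseval_frame_orthonormal_cols[OF V] trace_orthonormal_cols[OF V] p
  by (simp add: sq_norm_mult_row_def dist_sq_def)

lemma expectation_exp_neg_le:
  fixes X :: "'a \<Rightarrow> real"
  assumes "finite (set_pmf M)" "\<And>x. 0 \<le> X x" "0 \<le> \<tau>"
  shows "measure_pmf.expectation M (\<lambda>x. exp (- \<tau> * X x)) \<le> measure_pmf.prob M {x. X x \<le> t} + exp (- \<tau> * t)"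
proof -
  have "exp (- \<tau> * X x) \<le> indicator {x. X x \<le> t} x + exp (- \<tau> * t)" for x
  proof (cases "X x \<le> t")
    case True
    have "exp (- \<tau> * X x) \<le> 1"
      using assms(2,3) by simp
    then show ?thesis
      using True by (simp add: add_increasing2)
  next
    case False
    then show ?thesis
      using assms(3) by (simp add: mult_left_mono)
  qed
  then have "measure_pmf.expectation M (\<lambda>x. exp (- \<tau> * X x))
      \<le> measure_pmf.expectation M (\<lambda>x. indicator {x. X x \<le> t} x + exp (- \<tau> * t))"
    by (intro integral_mono integrable_measure_pmf_finite assms(1))
  also have "\<dots> = measure_pmf.prob M {x. X x \<le> t} + exp (- \<tau> * t)"
    by (simp add: Bochner_Integration.integral_add integrable_measure_pmf_finite[OF assms(1)])
  finally show ?thesis .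
qed

lemma exists_exp_moment_row_le:
  assumes p: "0 < p" "p \<le> 1/2" and Q: "(1 - p) ^ k < Q"
  shows "\<exists>\<tau>>0. \<forall>n V. orthonormal_cols n k V \<longrightarrow>
    measure_pmf.expectation (bernoulli_vec {..<n} p) (\<lambda>r. exp (- \<tau> * sq_norm_mult_row n k V r)) \<le> Q"
proof -
  have C: "0 < small_ball_const p"
    using p by (intro small_ball_const_pos) auto
  have Q0: "0 < (1 - p) ^ k"
    using p by simp
  define \<rho> where "\<rho> = min 1 ((1 - p) ^ k / small_ball_const p)"
  have \<rho>: "0 < \<rho>" "\<rho> \<le> 1" "small_ball_const p * \<rho> \<le> (1 - p) ^ k"
    unfolding \<rho>_def using C Q0 by (auto simp: min_def field_simps)
  define \<delta> where "\<delta> = min (Q - (1 - p) ^ k) (1/2)"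
  have \<delta>: "0 < \<delta>" "\<delta> < 1"
    unfolding \<delta>_def using Q by auto
  define \<tau> where "\<tau> = - ln \<delta> / \<rho>\<^sup>2"
  have "0 < \<tau>"
    unfolding \<tau>_def using \<delta> \<rho> by (simp add: divide_neg_pos)
  moreover have "measure_pmf.expectation (bernoulli_vec {..<n} p)
      (\<lambda>r. exp (- \<tau> * sq_norm_mult_row n k V r)) \<le> Q"
    if V: "orthonormal_cols n k V" for n V
  proof -
    have "measure_pmf.expectation (bernoulli_vec {..<n} p) (\<lambda>r. exp (- \<tau> * sq_norm_mult_row n k V r))
        \<le> measure_pmf.prob (bernoulli_vec {..<n} p) {r. sq_norm_mult_row n k V r \<le> \<rho>\<^sup>2}
          + exp (- \<tau> * \<rho>\<^sup>2)"
      using \<open>0 < \<tau>\<close> by (intro expectation_exp_neg_le finite_set_Pi_pmf sq_norm_mult_row_nonneg) auto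
    also have "\<dots> \<le> (1 - p) ^ k + \<delta>"
      unfolding \<tau>_def using small_ball_row[OF p \<rho> V] \<delta> \<rho> by simp
    also have "\<dots> \<le> Q"
      unfolding \<delta>_def by simp
    finally show ?thesis .
  qed
  ultimately show ?thesis
    by blast
qed

lemma prob_sum_rows_le:
  fixes X :: "('b \<Rightarrow> bool) \<Rightarrow> real"
  assumes "finite A" "finite B" "0 \<le> \<tau>"
  shows "measure_pmf.prob (bernoulli_vec (A \<times> B) p) {M. (\<Sum>i\<in>A. X (\<lambda>l. M (i, l))) \<le> t}
     \<le> exp (\<tau> * t) * measure_pmf.expectation (bernoulli_vec B p) (\<lambda>r. exp (- \<tau> * X r)) ^ card A"
proof -
  let ?M = "bernoulli_vec (A \<times> B) p"
  let ?S = "\<lambda>M. \<Sum>i\<in>A. X (\<lambda>l. M (i, l))"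
  have "indicator {M. ?S M \<le> t} M \<le> exp (\<tau> * t) * (\<Prod>i\<in>A. exp (- \<tau> * X (\<lambda>l. M (i, l))))" for M
  proof -
    have "exp (\<tau> * t) * (\<Prod>i\<in>A. exp (- \<tau> * X (\<lambda>l. M (i, l)))) = exp (\<tau> * (t - ?S M))"
      using assms(1) by (simp add: exp_sum[symmetric] sum_distrib_left exp_add[symmetric] algebra_simps
          sum_negf)
    moreover have "?S M \<le> t \<Longrightarrow> 1 \<le> exp (\<tau> * (t - ?S M))"
      using assms(3) by simp
    ultimately show ?thesis
      by (simp add: indicator_def)
  qed
  then have "measure_pmf.expectation ?M (indicator {M. ?S M \<le> t})
      \<le> measure_pmf.expectation ?M (\<lambda>M. exp (\<tau> * t) * (\<Prod>i\<in>A. exp (- \<tau> * X (\<lambda>l. M (i, l)))))"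
    using assms(1,2) by (intro integral_mono integrable_Pi_pmf) auto
  then have "measure_pmf.prob ?M {M. ?S M \<le> t}
      \<le> measure_pmf.expectation ?M (\<lambda>M. exp (\<tau> * t) * (\<Prod>i\<in>A. exp (- \<tau> * X (\<lambda>l. M (i, l)))))"
    by simp
  also have "\<dots> = exp (\<tau> * t) * measure_pmf.expectation (bernoulli_vec B p) (\<lambda>r. exp (- \<tau> * X r)) ^ card A"
    using expectation_prod_rows[OF assms(1,2), of "\<lambda>r. exp (- \<tau> * X r)" p] by simp
  finally show ?thesis .
qed

lemma exists_exp_growth_le:
  fixes \<tau> Q R :: real
  assumes "0 < \<tau>" "0 < Q" "Q < R"
  shows "\<exists>c>0. \<exists>N. \<forall>n\<ge>N. exp (\<tau> * (c\<^sup>2 * real n)) * Q ^ (n - k) \<le> R ^ n"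
proof -
  define s where "s = sqrt (R / Q)"
  have s: "1 < s" "s\<^sup>2 * Q = R"
    unfolding s_def using assms by auto
  define c where "c = sqrt (ln s / \<tau>)"
  have "0 < c"
    unfolding c_def using s assms by simp
  have exp_c: "exp (\<tau> * (c\<^sup>2 * real n)) = s ^ n" for n
  proof -
    have "\<tau> * (c\<^sup>2 * real n) = real n * ln s"
      unfolding c_def using s assms by simp
    then show ?thesis
      using s by (simp only: exp_of_nat_mult exp_ln)
  qed
  obtain N where N: "1 / Q ^ k < s ^ N"
    using real_arch_pow[OF s(1)] by blast
  have "exp (\<tau> * (c\<^sup>2 * real n)) * Q ^ (n - k) \<le> R ^ n" if "max N k \<le> n" for n
  proof -
    have "s ^ N \<le> s ^ n"
      using s(1) that by (intro power_increasing) auto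
    then have "1 / Q ^ k < s ^ n"
      using N by linarith
    then have one_le: "1 \<le> s ^ n * Q ^ k"
      using assms(2) by (simp add: field_simps)
    have "s ^ n * Q ^ (n - k) \<le> s ^ n * Q ^ (n - k) * (s ^ n * Q ^ k)"
      using mult_left_mono[OF one_le, of "s ^ n * Q ^ (n - k)"] s(1) assms(2) by simp
    also have "\<dots> = (s ^ n * s ^ n) * (Q ^ (n - k) * Q ^ k)"
      by (simp only: mult_ac)
    also have "Q ^ (n - k) * Q ^ k = Q ^ n"
      using that by (simp add: power_add[symmetric])
    also have "s ^ n * s ^ n * Q ^ n = (s\<^sup>2 * Q) ^ n"
      by (simp add: power_mult_distrib power2_eq_square)
    finally show ?thesis
      by (simp add: exp_c s(2))
  qed
  then show ?thesis
    using \<open>0 < c\<close> by blast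
qed

lemma prob_hs_norm_prod_le:
  assumes "0 < c" "0 \<le> \<tau>"
    and row_moment: "measure_pmf.expectation (bernoulli_vec {..<n} p)
      (\<lambda>r. exp (- \<tau> * sq_norm_mult_row n k V r)) \<le> Q"
  shows "measure_pmf.prob (ber_matrix_pmf m n p) {M. hs_norm_prod m n k M V \<le> c * sqrt (real n)}
    \<le> exp (\<tau> * (c\<^sup>2 * real n)) * Q ^ m"
proof -
  have "c * sqrt (real n) = sqrt (c\<^sup>2 * real n)"
    using assms(1) by (simp add: real_sqrt_mult)
  then have "measure_pmf.prob (ber_matrix_pmf m n p) {M. hs_norm_prod m n k M V \<le> c * sqrt (real n)}
      \<le> exp (\<tau> * (c\<^sup>2 * real n)) * measure_pmf.expectation (bernoulli_vec {..<n} p)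
          (\<lambda>r. exp (- \<tau> * sq_norm_mult_row n k V r)) ^ m"
    using prob_sum_rows_le[of "{..<m}" "{..<n}" \<tau>] assms(2)
    by (simp add: ber_matrix_pmf_def hs_norm_prod_eq)
  also have "\<dots> \<le> exp (\<tau> * (c\<^sup>2 * real n)) * Q ^ m"
    using row_moment by (intro mult_left_mono power_mono integral_nonneg) auto
  finally show ?thesis .
qed

theorem lemma2p7:
  fixes p \<epsilon> :: real and k :: nat
  assumes "0 < p" and "p \<le> 1/2" and "k \<ge> 1" and "\<epsilon> > 0"
  shows "\<exists>c>0. \<exists>n0::nat. \<forall>n\<ge>n0. \<forall>V :: nat \<Rightarrow> nat \<Rightarrow> real.
           orthonormal_cols n k V \<longrightarrow>
           measure_pmf.prob (ber_matrix_pmf (n - k) n p)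
              {M. hs_norm_prod (n - k) n k M V \<le> c * sqrt (real n)}
           \<le> (1 - p + \<epsilon>) ^ (k * n)"
proof (cases "1 \<le> 1 - p + \<epsilon>")
  case True
  have "measure_pmf.prob (ber_matrix_pmf (n - k) n p) E \<le> (1 - p + \<epsilon>) ^ (k * n)" for n E
    using measure_pmf.prob_le_1 one_le_power[OF True] by (rule order.trans)
  then show ?thesis
    by (intro exI[of _ 1]) auto
next
  case False
  define Q where "Q = (1 - p + \<epsilon> / 2) ^ k"
  define R where "R = (1 - p + \<epsilon>) ^ k"
  have Q: "(1 - p) ^ k < Q" "0 < Q" "Q < R"
    unfolding Q_def R_def using assms False by (auto intro!: power_strict_mono)
  obtain \<tau> where "0 < \<tau>" and row_moment: "\<And>n V. orthonormal_cols n k V \<Longrightarrow>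
      measure_pmf.expectation (bernoulli_vec {..<n} p) (\<lambda>r. exp (- \<tau> * sq_norm_mult_row n k V r)) \<le> Q"
    using exists_exp_moment_row_le[OF assms(1,2) Q(1)] by blast
  obtain c N where "0 < c" and growth: "\<And>n. N \<le> n \<Longrightarrow> exp (\<tau> * (c\<^sup>2 * real n)) * Q ^ (n - k) \<le> R ^ n"
    using exists_exp_growth_le[OF \<open>0 < \<tau>\<close> Q(2,3)] by blast
  have "measure_pmf.prob (ber_matrix_pmf (n - k) n p) {M. hs_norm_prod (n - k) n k M V \<le> c * sqrt (real n)}
      \<le> (1 - p + \<epsilon>) ^ (k * n)" if "N \<le> n" and V: "orthonormal_cols n k V" for n V
    using order.trans[OF prob_hs_norm_prod_le[OF \<open>0 < c\<close> less_imp_le[OF \<open>0 < \<tau>\<close>] row_moment[OF V]]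
        growth[OF \<open>N \<le> n\<close>]]
    unfolding R_def by (simp add: power_mult)
  then show ?thesis
    using \<open>0 < c\<close> by blast
qed

end
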